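(* Let $X=\{x_j:j\in J\}\subset\mathbb{R}^2$ be finite and let $\mathcal{D}$ be any farthest point Delaunay triangulation of $X$. A point $s$ is the $1$-centre of $X$ if and only if there is a face $D$ of $\mathcal{D}$ such that $s\in\mathrm{int}(D)$ and $s\in V_D$.
   Context: The $1$-centre of $X$ is the centre of the minimum enclosing circle of $X$. $V(x_j)=\{s:\|s-x_j\|=\max_{i\in J}\|s-x_i\|\}$ are the regions of the farthest point Voronoi diagram. A farthest point Delaunay triangulation of $X$ is a triangulation of the extreme points of $X$ in which the circumcircle of every triangle encloses all of $X$; its faces are its vertices, edges and triangles. For a face $D$ with vertex index set $J_D$, $V_D=\bigcap_{j\in J_D}V(x_j)$. $\mathrm{int}$ denotes relative interior, with $\mathrm{int}(\{x\})=\{x\}$. *)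

theory Defs
  imports "HOL-Analysis.Analysis"
begin

type_synonym pt = "real^2"

definition fp_region :: "pt set \<Rightarrow> pt \<Rightarrow> pt set" where
  "fp_region X x = {s. dist s x = Max ((\<lambda>y. dist s y) ` X)}"

definition V_face :: "pt set \<Rightarrow> pt set \<Rightarrow> pt set" where
  "V_face X D = (\<Inter>x\<in>D. fp_region X x)"

definition is_1centre :: "pt set \<Rightarrow> pt \<Rightarrow> bool" where
  "is_1centre X s = (\<forall>t. Max ((\<lambda>y. dist s y) ` X) \<le> Max ((\<lambda>y. dist t y) ` X))"

definition extreme_pts :: "pt set \<Rightarrow> pt set" where
  "extreme_pts X = {x\<in>X. x extreme_point_of (convex hull X)}"

text \<open>A triangulation of the point set P, given as the set T of all its faces
  (vertex sets of vertices, edges and triangles): a geometric simplicial complex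
  whose vertex set is P and whose underlying space is the convex hull of P.\<close>
definition is_triangulation :: "pt set set \<Rightarrow> pt set \<Rightarrow> bool" where
  "is_triangulation T P \<longleftrightarrow>
     (\<forall>D\<in>T. D \<noteq> {} \<and> finite D \<and> D \<subseteq> P \<and> \<not> affine_dependent D) \<and>
     (\<forall>D\<in>T. \<forall>E. E \<noteq> {} \<and> E \<subseteq> D \<longrightarrow> E \<in> T) \<and>
     (\<forall>D\<in>T. \<forall>E\<in>T. convex hull D \<inter> convex hull E = convex hull (D \<inter> E)) \<and>
     (\<Union>D\<in>T. convex hull D) = convex hull P \<and>
     \<Union>T = P"

definition fp_delaunay :: "pt set \<Rightarrow> pt set set \<Rightarrow> bool" where
  "fp_delaunay X T \<longleftrightarrow>
     is_triangulation T (extreme_pts X) \<and>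
     (\<forall>D\<in>T. card D = 3 \<longrightarrow>
        (\<exists>c r. (\<forall>v\<in>D. dist c v = r) \<and> (\<forall>x\<in>X. dist c x \<le> r)))"

end

theory Submission
  imports Defs
begin

text \<open>
  For barycentric weights of s with respect to points v and any point t, the weighted mean of
  the squared distances from t to the v is the squared distance from t to s plus the weighted
  mean of the squared distances from s to the v.

  If s lies in the convex hull of vertices that are all farthest points of X from s, at distance
  r, this mean is at least the square of r for every t, so every t has a point of X at
  distance at least r: s is the 1-centre.

  Conversely, the 1-centre s lies in the convex hull of its farthest points, since otherwise
  moving s slightly towards them lowers the maximal distance. If the hull of X has interior,
  s lies in a triangle of the triangulation whose circumcircle, with centre c and radius \<rho>,
  encloses X. The mean squared distance from c, taken with the weights of s on the triangle,
  is the square of \<rho>; taken with weights of s on its farthest points it is at most that.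
  By the identity, every vertex of the triangle with positive weight is a farthest point, and
  these vertices form a face with s in its relative interior. If X is collinear, the faces
  with s in their relative interior are an extreme point or the segment between the two
  extreme points, and an argument on the line applies.
\<close>

abbreviation max_dist :: "'a::metric_space set \<Rightarrow> 'a \<Rightarrow> real" where
  "max_dist X s \<equiv> Max ((\<lambda>y. dist s y) ` X)"

definition farthest_points :: "'a::metric_space set \<Rightarrow> 'a \<Rightarrow> 'a set" where
  "farthest_points X s = {x\<in>X. dist s x = max_dist X s}"

lemma farthest_points_subset: "farthest_points X s \<subseteq> X"
  by (auto simp: farthest_points_def)

lemma V_face_iff_subset_farthest_points:
  assumes "D \<subseteq> X"
  shows "s \<in> V_face X D \<longleftrightarrow> D \<subseteq> farthest_points X s"
  using assms by (auto simp: V_face_def fp_region_def farthest_points_def)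

lemma sum_sq_dist_convex_combination:
  fixes D :: "'a::real_inner set"
  assumes "sum u D = 1" "s = (\<Sum>v\<in>D. u v *\<^sub>R v)"
  shows "(\<Sum>v\<in>D. u v * (dist t v)\<^sup>2) = (dist t s)\<^sup>2 + (\<Sum>v\<in>D. u v * (dist s v)\<^sup>2)"
proof -
  have expand: "u v * (dist t v)\<^sup>2
      = u v * (dist t s)\<^sup>2 + 2 * (u v * inner (t - s) (s - v)) + u v * (dist s v)\<^sup>2" for v
  proof -
    have "(dist t v)\<^sup>2 = (dist t s)\<^sup>2 + 2 * inner (t - s) (s - v) + (dist s v)\<^sup>2"
      using dot_norm[of "t - s" "s - v"] by (simp add: dist_norm)
    then show ?thesis by (simp add: distrib_left)
  qed
  have "(\<Sum>v\<in>D. u v * inner (t - s) (s - v)) = inner (t - s) (\<Sum>v\<in>D. u v *\<^sub>R (s - v))"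
    by (simp add: inner_sum_right)
  also have "(\<Sum>v\<in>D. u v *\<^sub>R (s - v)) = sum u D *\<^sub>R s - s"
    by (simp add: assms(2) scaleR_diff_right sum_subtractf scaleR_sum_left)
  finally have centred: "(\<Sum>v\<in>D. u v * inner (t - s) (s - v)) = 0"
    using assms(1) by simp
  have "(\<Sum>v\<in>D. u v * (dist t v)\<^sup>2)
      = sum u D * (dist t s)\<^sup>2 + 2 * (\<Sum>v\<in>D. u v * inner (t - s) (s - v))
        + (\<Sum>v\<in>D. u v * (dist s v)\<^sup>2)"
    by (simp only: expand sum.distrib sum_distrib_left sum_distrib_right)
  then show ?thesis using assms(1) centred by simp
qed

lemma convex_combination_sq_dist_le:
  fixes D :: "'a::real_inner set"
  assumes "\<forall>v\<in>D. 0 \<le> u v" "sum u D = 1" "s = (\<Sum>v\<in>D. u v *\<^sub>R v)"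
    and "\<forall>v\<in>D. dist t v \<le> R"
  shows "(dist t s)\<^sup>2 + (\<Sum>v\<in>D. u v * (dist s v)\<^sup>2) \<le> R\<^sup>2"
proof -
  have "(\<Sum>v\<in>D. u v * (dist t v)\<^sup>2) \<le> (\<Sum>v\<in>D. u v * R\<^sup>2)"
    using assms(1,4) by (intro sum_mono mult_left_mono power_mono) auto
  then show ?thesis
    using assms(2) sum_sq_dist_convex_combination[OF assms(2,3), of t]
    by (simp add: sum_distrib_right[symmetric])
qed

lemma convex_combination_sq_dist_eq:
  fixes D :: "'a::real_inner set"
  assumes "sum u D = 1" "s = (\<Sum>v\<in>D. u v *\<^sub>R v)" and "\<forall>v\<in>D. dist t v = R"
  shows "(dist t s)\<^sup>2 + (\<Sum>v\<in>D. u v * (dist s v)\<^sup>2) = R\<^sup>2"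
  using assms(3) sum_sq_dist_convex_combination[OF assms(1,2), of t]
  by (simp add: assms(1) sum_distrib_right[symmetric])

lemma convex_hull_affine_independent_support:
  fixes D :: "'a::euclidean_space set"
  assumes "finite D" "\<not> affine_dependent D" "s \<in> convex hull D"
  obtains u where "\<forall>v\<in>D. 0 \<le> u v" "sum u D = 1" "s = (\<Sum>v\<in>D. u v *\<^sub>R v)"
    "{v\<in>D. 0 < u v} \<noteq> {}" "s \<in> rel_interior (convex hull {v\<in>D. 0 < u v})"
proof -
  obtain u where u: "\<forall>v\<in>D. 0 \<le> u v" "sum u D = 1" "s = (\<Sum>v\<in>D. u v *\<^sub>R v)"
    using assms(3) convex_hull_finite[OF assms(1)] by auto
  let ?E = "{v\<in>D. 0 < u v}"
  have "sum u ?E = sum u D" "(\<Sum>v\<in>?E. u v *\<^sub>R v) = (\<Sum>v\<in>D. u v *\<^sub>R v)"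
    using u(1) by (auto intro!: sum.mono_neutral_left simp: assms(1) less_le)
  then have sum_E: "sum u ?E = 1" "(\<Sum>v\<in>?E. u v *\<^sub>R v) = s"
    using u(2,3) by simp_all
  then have "?E \<noteq> {}" by (metis sum.empty zero_neq_one)
  moreover have "\<not> affine_dependent ?E"
    using assms(2) affine_dependent_subset by blast
  then have "s \<in> rel_interior (convex hull ?E)"
    using sum_E assms(1) by (subst rel_interior_convex_hull_explicit) auto
  ultimately show ?thesis using that u by blast
qed

lemma eventually_dist_add_scaleR_less:
  fixes a s x :: "'a::real_inner"
  assumes "0 < inner a (x - s)"
  shows "\<forall>\<^sub>F \<epsilon> in at_right 0. dist (s + \<epsilon> *\<^sub>R a) x < dist s x"
proof -
  have "((\<lambda>\<epsilon>. 2 * inner a (x - s) - \<epsilon> * (norm a)\<^sup>2) \<longlongrightarrow> 2 * inner a (x - s)) (at_right 0)"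
    by (auto intro!: tendsto_eq_intros)
  then have "\<forall>\<^sub>F \<epsilon> in at_right 0. 0 < 2 * inner a (x - s) - \<epsilon> * (norm a)\<^sup>2"
    using order_tendstoD(1)[OF _ mult_pos_pos[OF _ assms]] by fastforce
  moreover have "\<forall>\<^sub>F \<epsilon> in at_right (0::real). 0 < \<epsilon>"
    by (simp add: eventually_at_right_less)
  ultimately show ?thesis
  proof eventually_elim
    case (elim \<epsilon>)
    have "s + \<epsilon> *\<^sub>R a - x = (s - x) + \<epsilon> *\<^sub>R a" by simp
    then have "(dist (s + \<epsilon> *\<^sub>R a) x)\<^sup>2 = inner ((s - x) + \<epsilon> *\<^sub>R a) ((s - x) + \<epsilon> *\<^sub>R a)"
      by (simp only: dist_norm power2_norm_eq_inner)
    also have "\<dots> = (dist s x)\<^sup>2 + 2 * \<epsilon> * inner a (s - x) + \<epsilon> * \<epsilon> * (norm a)\<^sup>2"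
      by (simp add: inner_add_left inner_add_right inner_commute dist_norm power2_norm_eq_inner)
    also have "\<dots> = (dist s x)\<^sup>2 - \<epsilon> * (2 * inner a (x - s) - \<epsilon> * (norm a)\<^sup>2)"
      by (simp add: algebra_simps power2_eq_square)
    also have "\<dots> < (dist s x)\<^sup>2"
      using mult_pos_pos[OF elim(2,1)] by linarith
    finally show ?case
      by (rule power2_less_imp_less) simp
  qed
qed

lemma separating_direction_outside_convex_hull:
  fixes F :: "'a::euclidean_space set"
  assumes "finite F" "s \<notin> convex hull F"
  obtains a where "\<forall>x\<in>F. 0 < inner a (x - s)"
proof -
  obtain a b where "inner a s < b" "\<forall>x\<in>convex hull F. b < inner a x"
    using separating_hyperplane_closed_point[OF convex_convex_hull _ assms(2)]
      compact_imp_closed[OF finite_imp_compact_convex_hull[OF assms(1)]] by blast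
  then have "\<forall>x\<in>F. 0 < inner a (x - s)"
    using hull_subset[of F convex] by (force simp: inner_diff_right)
  then show ?thesis by (rule that)
qed

lemma minimax_point_in_convex_hull_farthest_points:
  fixes X :: "'a::euclidean_space set"
  assumes "finite X" "X \<noteq> {}" and minimax: "\<And>t. max_dist X s \<le> max_dist X t"
  shows "s \<in> convex hull (farthest_points X s)"
proof (rule ccontr)
  assume "s \<notin> convex hull (farthest_points X s)"
  moreover have "finite (farthest_points X s)"
    using assms(1) by (simp add: farthest_points_def)
  ultimately obtain a where a: "\<forall>x\<in>farthest_points X s. 0 < inner a (x - s)"
    using separating_direction_outside_convex_hull by blast
  have "\<forall>\<^sub>F \<epsilon> in at_right 0. dist (s + \<epsilon> *\<^sub>R a) x < max_dist X s" if "x \<in> X" for x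
  proof (cases "x \<in> farthest_points X s")
    case True
    then have "0 < inner a (x - s)" using a by blast
    from eventually_dist_add_scaleR_less[OF this] show ?thesis
      using True by (simp add: farthest_points_def)
  next
    case False
    then have "dist s x < max_dist X s"
      using that assms(1) by (auto simp: farthest_points_def order_less_le)
    moreover have "((\<lambda>\<epsilon>. dist (s + \<epsilon> *\<^sub>R a) x) \<longlongrightarrow> dist (s + 0 *\<^sub>R a) x) (at_right 0)"
      by (intro tendsto_intros)
    ultimately show ?thesis
      by (intro order_tendstoD(2)) simp_all
  qed
  then have "\<forall>\<^sub>F \<epsilon> in at_right 0. \<forall>x\<in>X. dist (s + \<epsilon> *\<^sub>R a) x < max_dist X s"
    by (intro eventually_ball_finite assms(1) ballI)
  then obtain \<epsilon> where "\<forall>x\<in>X. dist (s + \<epsilon> *\<^sub>R a) x < max_dist X s"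
    using eventually_happens'[OF trivial_limit_at_right_real] by blast
  then have "max_dist X (s + \<epsilon> *\<^sub>R a) < max_dist X s"
    using assms(1,2) by simp
  then show False
    using minimax not_le by blast
qed

lemma convex_hull_farthest_points_imp_minimax:
  fixes X D :: "'a::real_inner set"
  assumes "finite X" "D \<subseteq> farthest_points X s" "s \<in> convex hull D"
  shows "max_dist X s \<le> max_dist X t"
proof -
  have D_X: "D \<subseteq> X"
    using assms(2) farthest_points_subset by blast
  then have "finite D"
    using assms(1) by (rule finite_subset)
  then obtain u where u: "\<forall>v\<in>D. 0 \<le> u v" "sum u D = 1" "s = (\<Sum>v\<in>D. u v *\<^sub>R v)"
    using assms(3) convex_hull_finite[OF \<open>finite D\<close>] by auto
  have "\<forall>v\<in>D. dist s v = max_dist X s"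
    using assms(2) by (auto simp: farthest_points_def)
  from convex_combination_sq_dist_eq[OF u(2,3) this]
  have on_sphere: "(\<Sum>v\<in>D. u v * (dist s v)\<^sup>2) = (max_dist X s)\<^sup>2"
    by simp
  have t_bound: "\<forall>v\<in>D. dist t v \<le> max_dist X t"
    using assms(1) D_X by auto
  obtain v where "v \<in> D"
    using assms(3) by fastforce
  then have "0 \<le> max_dist X t"
    using t_bound by (meson zero_le_dist order_trans)
  have "(dist t s)\<^sup>2 + (\<Sum>v\<in>D. u v * (dist s v)\<^sup>2) \<le> (max_dist X t)\<^sup>2"
    using convex_combination_sq_dist_le[OF u t_bound] .
  then have "(max_dist X s)\<^sup>2 \<le> (max_dist X t)\<^sup>2"
    using on_sphere zero_le_power2[of "dist t s"] by linarith
  then show ?thesis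
    using \<open>0 \<le> max_dist X t\<close> by (rule power2_le_imp_le)
qed

lemma circumscribed_simplex_support_subset_farthest_points:
  fixes X D :: "'a::real_inner set"
  assumes "finite X" "D \<subseteq> X" "\<forall>v\<in>D. 0 \<le> u v" "sum u D = 1" "s = (\<Sum>v\<in>D. u v *\<^sub>R v)"
    and "s \<in> convex hull (farthest_points X s)"
    and "\<forall>v\<in>D. dist c v = \<rho>" "\<forall>x\<in>X. dist c x \<le> \<rho>"
  shows "{v\<in>D. 0 < u v} \<subseteq> farthest_points X s"
proof
  let ?F = "farthest_points X s" and ?r = "max_dist X s"
  fix v assume v: "v \<in> {v\<in>D. 0 < u v}"
  have le_r: "\<forall>w\<in>D. dist s w \<le> ?r"
    using assms(1,2) by auto
  show "v \<in> ?F"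
  proof (rule ccontr)
    assume "v \<notin> ?F"
    then have "dist s v < ?r"
      using v le_r assms(2) by (auto simp: farthest_points_def order_less_le)
    then have "(dist s v)\<^sup>2 < ?r\<^sup>2"
      by (simp add: power_strict_mono)
    have "finite ?F"
      using assms(1) farthest_points_subset finite_subset by blast
    then obtain \<mu> where \<mu>: "\<forall>x\<in>?F. 0 \<le> \<mu> x" "sum \<mu> ?F = 1" "s = (\<Sum>x\<in>?F. \<mu> x *\<^sub>R x)"
      using assms(6) convex_hull_finite[OF \<open>finite ?F\<close>] by auto
    have "\<forall>x\<in>?F. dist c x \<le> \<rho>" "\<forall>x\<in>?F. dist s x = ?r"
      using assms(8) by (auto simp: farthest_points_def)
    then have "(dist c s)\<^sup>2 + ?r\<^sup>2 \<le> \<rho>\<^sup>2"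
      using convex_combination_sq_dist_le[OF \<mu>, of c \<rho>] convex_combination_sq_dist_eq[OF \<mu>(2,3), of s ?r]
      by simp
    moreover have "(dist c s)\<^sup>2 + (\<Sum>w\<in>D. u w * (dist s w)\<^sup>2) = \<rho>\<^sup>2"
      by (rule convex_combination_sq_dist_eq[OF assms(4,5,7)])
    moreover have "(\<Sum>w\<in>D. u w * (dist s w)\<^sup>2) < (\<Sum>w\<in>D. u w * ?r\<^sup>2)"
    proof (rule sum_strict_mono_ex1)
      show "finite D"
        using assms(1,2) finite_subset by blast
      show "\<forall>w\<in>D. u w * (dist s w)\<^sup>2 \<le> u w * ?r\<^sup>2"
        using assms(3) le_r by (auto intro!: mult_left_mono power_mono)
      show "\<exists>w\<in>D. u w * (dist s w)\<^sup>2 < u w * ?r\<^sup>2"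
        using v \<open>(dist s v)\<^sup>2 < ?r\<^sup>2\<close> mult_strict_left_mono by blast
    qed
    moreover have "(\<Sum>w\<in>D. u w * ?r\<^sup>2) = ?r\<^sup>2"
      using assms(4) by (simp add: sum_distrib_right[symmetric])
    ultimately show False
      by linarith
  qed
qed

lemma interior_Union_closed_empty:
  fixes \<A> :: "'a::topological_space set set"
  assumes "finite \<A>" "\<And>A. A \<in> \<A> \<Longrightarrow> closed A" "\<And>A. A \<in> \<A> \<Longrightarrow> interior A = {}"
  shows "interior (\<Union>\<A>) = {}"
  using assms
proof (induction \<A> rule: finite_induct)
  case (insert A \<A>)
  then have "interior (A \<union> \<Union>\<A>) = interior A"
    by (subst Un_commute) (simp add: interior_closed_Un_empty_interior closed_Union)
  then show ?case
    using insert.prems by simp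
qed simp

lemma convex_subset_Union_nonempty_interior:
  fixes C :: "'a::euclidean_space set"
  assumes "convex C" "interior C \<noteq> {}" "finite \<A>" "\<And>A. A \<in> \<A> \<Longrightarrow> closed A" "C \<subseteq> \<Union>\<A>"
  shows "C \<subseteq> \<Union>{A\<in>\<A>. interior A \<noteq> {}}"
proof -
  let ?G = "{A\<in>\<A>. interior A \<noteq> {}}" and ?H = "{A\<in>\<A>. interior A = {}}"
  have closed_G: "closed (\<Union>?G)"
    using assms(3,4) by (intro closed_Union) auto
  have "interior (\<Union>?H) = {}"
    using assms(3,4) by (intro interior_Union_closed_empty) auto
  moreover have "\<Union>\<A> = \<Union>?G \<union> \<Union>?H"
    by blast
  ultimately have "interior (\<Union>\<A>) = interior (\<Union>?G)"
    using interior_closed_Un_empty_interior[OF closed_G] by simp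
  then have "interior C \<subseteq> \<Union>?G"
    using interior_mono[OF assms(5)] interior_subset by blast
  then have "closure (interior C) \<subseteq> \<Union>?G"
    using closed_G closure_minimal by blast
  then show ?thesis
    using convex_closure_interior[OF assms(1,2)] closure_subset by blast
qed

lemma card_simplex_nonempty_interior:
  fixes D :: "'a::euclidean_space set"
  assumes "\<not> affine_dependent D" "interior (convex hull D) \<noteq> {}"
  shows "card D = DIM('a) + 1"
proof -
  have "finite D"
    using assms(1) by (rule aff_independent_finite)
  then have "\<not> card D \<le> DIM('a)"
    using assms(2) empty_interior_convex_hull by blast
  moreover have "aff_dim D \<le> DIM('a)"
    by (rule aff_dim_le_DIM)
  ultimately show ?thesis
    using aff_dim_affine_independent[OF assms(1)] by linarith
qed

lemma collinear_if_interior_convex_hull_empty: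
  fixes X :: "(real^2) set"
  assumes "interior (convex hull X) = {}"
  shows "collinear X"
proof (cases "X = {}")
  case False
  then have "aff_dim (convex hull X) \<noteq> 2"
    using assms interior_rel_interior_gen[of "convex hull X"]
      rel_interior_eq_empty[of "convex hull X"] by auto
  then show ?thesis
    using aff_dim_le_DIM[of X] by (simp add: collinear_aff_dim aff_dim_convex_hull)
qed simp

lemma extreme_point_in_convex_hull_subset:
  assumes "a extreme_point_of (convex hull X)" "F \<subseteq> X" "a \<in> convex hull F"
  shows "a \<in> F"
proof -
  have "convex hull F \<subseteq> convex hull X"
    using assms(2) by (rule hull_mono)
  then have "a extreme_point_of (convex hull F)"
    using assms(1,3) by (auto simp: extreme_point_of_def)
  then show ?thesis
    by (rule extreme_point_of_convex_hull)
qed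

lemma collinear_subset_closed_segment_extreme_points:
  fixes X :: "'a::euclidean_space set"
  assumes "collinear X" "a \<noteq> b"
    and "a extreme_point_of (convex hull X)" "b extreme_point_of (convex hull X)"
  shows "X \<subseteq> closed_segment a b"
proof
  fix x assume "x \<in> X"
  have "a \<in> X" "b \<in> X"
    using assms(3,4) extreme_point_of_convex_hull by blast+
  have not_between: "p \<notin> open_segment q y"
    if "p extreme_point_of (convex hull X)" "q \<in> X" "y \<in> X" for p q y
    using that hull_subset[of X convex] by (auto simp: extreme_point_of_def)
  have "{a, b, x} \<subseteq> X"
    using \<open>a \<in> X\<close> \<open>b \<in> X\<close> \<open>x \<in> X\<close> by blast
  then have "collinear {a, b, x}"
    using assms(1) collinear_subset by blast
  then consider "a \<in> closed_segment b x" | "b \<in> closed_segment x a" | "x \<in> closed_segment a b"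
    by (auto simp: collinear_between_cases between_mem_segment)
  then show "x \<in> closed_segment a b"
  proof cases
    case 1
    then have "a = x"
      using not_between[OF assms(3) \<open>b \<in> X\<close> \<open>x \<in> X\<close>] assms(2) by (auto simp: open_segment_def)
    then show ?thesis by simp
  next
    case 2
    then have "b = x"
      using not_between[OF assms(4) \<open>x \<in> X\<close> \<open>a \<in> X\<close>] assms(2) by (auto simp: open_segment_def)
    then show ?thesis by simp
  qed
qed

lemma farthest_points_subset_segment_ends:
  fixes X :: "'a::euclidean_space set"
  assumes "finite X" "X \<subseteq> closed_segment a b" "a \<in> X" "b \<in> X"
  shows "farthest_points X s \<subseteq> {a, b}"
proof
  fix x assume x: "x \<in> farthest_points X s"
  show "x \<in> {a, b}"
  proof (rule ccontr)
    assume "x \<notin> {a, b}"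
    then have "x \<in> open_segment a b"
      using x assms(2) by (auto simp: farthest_points_def open_segment_def)
    then have "dist s x < dist s a \<or> dist s x < dist s b"
      by (rule dist_decreases_open_segment)
    moreover have "dist s a \<le> max_dist X s" "dist s b \<le> max_dist X s"
      using assms(1,3,4) by simp_all
    ultimately show False
      using x by (auto simp: farthest_points_def)
  qed
qed

lemma subset_pair_eq_if_open_segment_in_convex_hull:
  fixes a b s :: "'a::real_vector"
  assumes "F \<subseteq> {a, b}" "s \<in> open_segment a b" "s \<in> convex hull F"
  shows "F = {a, b}"
proof -
  have "s \<noteq> a" "s \<noteq> b"
    using assms(2) unfolding open_segment_def by blast+
  have single: "s = q" if "F \<subseteq> {q}" for q
    using assms(3) hull_mono[OF that, of convex] by auto
  have "a \<in> F" "b \<in> F"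
    using single[of a] single[of b] assms(1) \<open>s \<noteq> a\<close> \<open>s \<noteq> b\<close> by blast+
  then show ?thesis
    using assms(1) by auto
qed

lemma collinear_simplex_subset_farthest_points:
  fixes X D :: "'a::euclidean_space set"
  assumes "finite X" "collinear X" "\<And>a. a \<in> D \<Longrightarrow> a extreme_point_of (convex hull X)"
    and "\<not> affine_dependent D" "s \<in> rel_interior (convex hull D)"
    and "s \<in> convex hull (farthest_points X s)"
  shows "D \<subseteq> farthest_points X s"
proof -
  have "D \<subseteq> X"
    using assms(3) extreme_point_of_convex_hull by blast
  have "aff_dim D \<le> 1"
    using aff_dim_subset[OF \<open>D \<subseteq> X\<close>] assms(2) by (simp add: collinear_aff_dim)
  moreover have "card D \<noteq> 0"
    using assms(5) aff_independent_finite[OF assms(4)] by auto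
  ultimately have "card D = 1 \<or> card D = 2"
    using aff_dim_affine_independent[OF assms(4)] by linarith
  then consider a where "D = {a}" | a b where "D = {a, b}" "a \<noteq> b"
    by (auto simp: card_1_singleton_iff card_2_iff)
  then show ?thesis
  proof cases
    case 1
    then have "s = a"
      using assms(5) by simp
    then show ?thesis
      using extreme_point_in_convex_hull_subset[OF assms(3) farthest_points_subset] assms(6) 1
      by auto
  next
    case 2
    then have "s \<in> open_segment a b"
      using assms(5) by (simp add: segment_convex_hull[symmetric] rel_interior_closed_segment)
    moreover have "X \<subseteq> closed_segment a b"
      using collinear_subset_closed_segment_extreme_points assms(2,3) 2 by blast
    then have "farthest_points X s \<subseteq> {a, b}"
      using farthest_points_subset_segment_ends assms(1) \<open>D \<subseteq> X\<close> 2 by blast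
    ultimately have "farthest_points X s = {a, b}"
      using assms(6) by (intro subset_pair_eq_if_open_segment_in_convex_hull)
    then show ?thesis
      using 2 by simp
  qed
qed

lemma is_triangulationD:
  assumes "is_triangulation T P"
  shows "\<And>D. D \<in> T \<Longrightarrow> finite D \<and> D \<subseteq> P \<and> \<not> affine_dependent D"
    and "\<And>D E. D \<in> T \<Longrightarrow> E \<noteq> {} \<Longrightarrow> E \<subseteq> D \<Longrightarrow> E \<in> T"
    and "(\<Union>D\<in>T. convex hull D) = convex hull P"
proof -
  note parts = assms[unfolded is_triangulation_def]
  have faces: "\<forall>D\<in>T. D \<noteq> {} \<and> finite D \<and> D \<subseteq> P \<and> \<not> affine_dependent D"
    using parts by (elim conjE) assumption
  have down_closed: "\<forall>D\<in>T. \<forall>E. E \<noteq> {} \<and> E \<subseteq> D \<longrightarrow> E \<in> T"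
    using parts by (elim conjE) assumption
  have cover: "(\<Union>D\<in>T. convex hull D) = convex hull P"
    using parts by (elim conjE) assumption
  show "\<And>D. D \<in> T \<Longrightarrow> finite D \<and> D \<subseteq> P \<and> \<not> affine_dependent D"
    using faces by simp
  show "\<And>D E. D \<in> T \<Longrightarrow> E \<noteq> {} \<Longrightarrow> E \<subseteq> D \<Longrightarrow> E \<in> T"
    using down_closed by simp
  show "(\<Union>D\<in>T. convex hull D) = convex hull P"
    by (fact cover)
qed

lemma triangulation_simplex_cover:
  fixes P :: "(real^2) set"
  assumes "is_triangulation T P" "finite P" "s \<in> convex hull P"
  obtains D where "D \<in> T" "s \<in> convex hull D" "interior (convex hull P) \<noteq> {} \<Longrightarrow> card D = 3"
proof (cases "interior (convex hull P) = {}")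
  case True
  then show ?thesis
    using that is_triangulationD(3)[OF assms(1)] assms(3) by blast
next
  case False
  have faces: "\<And>D. D \<in> T \<Longrightarrow> finite D \<and> D \<subseteq> P \<and> \<not> affine_dependent D"
    and cover: "(\<Union>D\<in>T. convex hull D) = convex hull P"
    using is_triangulationD[OF assms(1)] by blast+
  have "finite T"
    using faces assms(2) by (metis PowI finite_Pow_iff rev_finite_subset subsetI)
  then have "convex hull P \<subseteq> \<Union>{A \<in> (\<lambda>D. convex hull D) ` T. interior A \<noteq> {}}"
    using faces cover False
    by (intro convex_subset_Union_nonempty_interior)
      (auto intro!: compact_imp_closed finite_imp_compact_convex_hull)
  then obtain D where "D \<in> T" "interior (convex hull D) \<noteq> {}" "s \<in> convex hull D"
    using assms(3) by blast
  moreover have "card D = 3"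
    using card_simplex_nonempty_interior faces calculation(1,2) by fastforce
  ultimately show ?thesis
    using that by blast
qed

lemma convex_hull_extreme_pts:
  assumes "finite X"
  shows "convex hull (extreme_pts X) = convex hull X"
proof -
  have "extreme_pts X = {x. x extreme_point_of (convex hull X)}"
    by (auto simp: extreme_pts_def dest: extreme_point_of_convex_hull)
  then show ?thesis
    using Krein_Milman_polytope[OF assms] by simp
qed

lemma fp_delaunay_face_subset_farthest_points:
  assumes "finite X" "fp_delaunay X T" "s \<in> convex hull (farthest_points X s)"
  shows "\<exists>D\<in>T. s \<in> rel_interior (convex hull D) \<and> D \<subseteq> farthest_points X s"
proof -
  let ?P = "extreme_pts X"
  have tri: "is_triangulation T ?P"
    and circum: "\<And>D. D \<in> T \<Longrightarrow> card D = 3 \<Longrightarrow>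
      \<exists>c \<rho>. (\<forall>v\<in>D. dist c v = \<rho>) \<and> (\<forall>x\<in>X. dist c x \<le> \<rho>)"
    using assms(2) by (auto simp: fp_delaunay_def)
  have P_X: "?P \<subseteq> X"
    by (auto simp: extreme_pts_def)
  have hull_P: "convex hull ?P = convex hull X"
    using assms(1) by (rule convex_hull_extreme_pts)
  have "s \<in> convex hull ?P"
    using assms(3) hull_mono[OF farthest_points_subset] hull_P by blast
  then obtain D where D: "D \<in> T" "s \<in> convex hull D" "interior (convex hull X) \<noteq> {} \<Longrightarrow> card D = 3"
    using triangulation_simplex_cover[OF tri] assms(1) P_X finite_subset hull_P by metis
  have face_D: "D \<subseteq> ?P" "\<not> affine_dependent D"
    using is_triangulationD(1)[OF tri D(1)] by auto
  then obtain u where u: "\<forall>v\<in>D. 0 \<le> u v" "sum u D = 1" "s = (\<Sum>v\<in>D. u v *\<^sub>R v)"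
    "{v\<in>D. 0 < u v} \<noteq> {}" "s \<in> rel_interior (convex hull {v\<in>D. 0 < u v})"
    using convex_hull_affine_independent_support[OF _ _ D(2)] aff_independent_finite by blast
  have "{v\<in>D. 0 < u v} \<subseteq> farthest_points X s"
  proof (cases "interior (convex hull X) = {}")
    case True
    have "\<not> affine_dependent {v\<in>D. 0 < u v}"
      using face_D(2) affine_dependent_subset by blast
    moreover have "a extreme_point_of (convex hull X)" if "a \<in> {v\<in>D. 0 < u v}" for a
      using that face_D(1) by (auto simp: extreme_pts_def)
    ultimately show ?thesis
      using collinear_simplex_subset_farthest_points[OF assms(1) _ _ _ u(5) assms(3)]
        collinear_if_interior_convex_hull_empty[OF True] by blast
  next
    case False
    then obtain c \<rho> where "\<forall>v\<in>D. dist c v = \<rho>" "\<forall>x\<in>X. dist c x \<le> \<rho>"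
      using circum D by blast
    then show ?thesis
      using circumscribed_simplex_support_subset_farthest_points[OF assms(1) _ u(1-3) assms(3)]
        face_D(1) P_X by blast
  qed
  then show ?thesis
    using is_triangulationD(2)[OF tri D(1) u(4)] u(5) by blast
qed

lemma fp_delaunay_face_subset:
  assumes "fp_delaunay X T" "D \<in> T"
  shows "D \<subseteq> X"
proof -
  have "is_triangulation T (extreme_pts X)"
    using assms(1) by (simp add: fp_delaunay_def)
  then have "D \<subseteq> extreme_pts X"
    using is_triangulationD(1) assms(2) by blast
  then show ?thesis
    by (auto simp: extreme_pts_def)
qed

theorem lemma6:
  fixes X :: "(real^2) set" and T :: "(real^2) set set" and s :: "real^2"
  assumes "finite X" and "X \<noteq> {}" and "fp_delaunay X T"
  shows "is_1centre X s \<longleftrightarrow>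
           (\<exists>D\<in>T. s \<in> rel_interior (convex hull D) \<and> s \<in> V_face X D)"
proof -
  have V_face_iff: "s \<in> V_face X D \<longleftrightarrow> D \<subseteq> farthest_points X s" if "D \<in> T" for D
    using V_face_iff_subset_farthest_points fp_delaunay_face_subset[OF assms(3) that] by blast
  show ?thesis
  proof
    assume "is_1centre X s"
    then have "\<And>t. max_dist X s \<le> max_dist X t"
      unfolding is_1centre_def by blast
    then have "s \<in> convex hull (farthest_points X s)"
      by (rule minimax_point_in_convex_hull_farthest_points[OF assms(1,2)])
    then show "\<exists>D\<in>T. s \<in> rel_interior (convex hull D) \<and> s \<in> V_face X D"
      using fp_delaunay_face_subset_farthest_points[OF assms(1,3)] V_face_iff by blast
  next
    assume "\<exists>D\<in>T. s \<in> rel_interior (convex hull D) \<and> s \<in> V_face X D"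
    then obtain D where "D \<subseteq> farthest_points X s" "s \<in> convex hull D"
      using V_face_iff rel_interior_subset by blast
    then show "is_1centre X s"
      unfolding is_1centre_def by (blast intro: convex_hull_farthest_points_imp_minimax[OF assms(1)])
  qed
qed

end
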